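(* Let ${\bf X},{\bf Y}$ be $r\times r$ complex matrices. If $\det({\bf S}{\bf X}+{\bf Y})=0$ for every $r\times r$ diagonal matrix ${\bf S}$ with diagonal entries in $\{1,-1\}$, then $\det({\bf Y})=0$. *)

theory Defs
  imports "HOL-Analysis.Analysis"
begin

end

theory Submission
  imports Defs
begin

text \<open>The determinant is affine in each row, so
  \<open>det(\<dots>, X\<^sub>k + Y\<^sub>k, \<dots>) + det(\<dots>, -X\<^sub>k + Y\<^sub>k, \<dots>) = 2 det(\<dots>, Y\<^sub>k, \<dots>)\<close>.
  Hence replacing the rows \<open>s\<^sub>k X\<^sub>k + Y\<^sub>k\<close> of \<open>SX + Y\<close> by \<open>Y\<^sub>k\<close> one at a time
  preserves the vanishing of the determinant for every choice of the remaining signs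
  (as \<open>2 \<noteq> 0\<close>); once every row is replaced, the matrix is \<open>Y\<close>.\<close>

lemma diagonal_matrix_mult_rows:
  fixes X :: "'a::semiring_1 ^ 'n ^ 'n"
  shows "(\<chi> i j. if i = j then s i else 0) ** X = (\<chi> i. s i *s X $ i)"
proof -
  have "(\<Sum>k\<in>UNIV. (if i = k then s i else 0) * X $ k $ j) = s i * X $ i $ j" for i j
    by (simp add: if_distrib[where f = "\<lambda>c. c * _"] cong: if_cong)
  then show ?thesis
    by (simp add: vec_eq_iff matrix_matrix_mult_def)
qed

lemma det_row_plus_minus:
  fixes A :: "'a::comm_ring_1 ^ 'n ^ 'n"
  shows "det (\<chi> i. if i = k then x + y else A $ i) + det (\<chi> i. if i = k then - x + y else A $ i)
    = 2 * det (\<chi> i. if i = k then y else A $ i)"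
  by (simp only: vector_sneg_minus1[of x] det_row_add det_row_mul) (simp add: algebra_simps)

text \<open>Interpolates between \<open>SX + Y\<close> (for \<open>K = {}\<close>) and \<open>Y\<close> (for \<open>K = UNIV\<close>).\<close>

definition partially_signed_sum ::
    "'a::semiring_1 ^ 'n ^ 'n \<Rightarrow> 'a ^ 'n ^ 'n \<Rightarrow> ('n \<Rightarrow> 'a) \<Rightarrow> 'n set \<Rightarrow> 'a ^ 'n ^ 'n"
  where "partially_signed_sum X Y s K = (\<chi> i. if i \<in> K then Y $ i else s i *s X $ i + Y $ i)"

lemma det_partially_signed_sum_eq_0:
  fixes X Y :: "'a::field_char_0 ^ 'n ^ 'n"
  assumes "finite K"
    and signs_zero: "\<And>s. (\<forall>i. s i = 1 \<or> s i = -1) \<Longrightarrow> det (partially_signed_sum X Y s {}) = 0"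
    and "\<forall>i. s i = 1 \<or> s i = -1"
  shows "det (partially_signed_sum X Y s K) = 0"
  using assms(1,3)
proof (induction K arbitrary: s rule: finite_induct)
  case empty
  then show ?case
    using signs_zero by blast
next
  case (insert k K)
  let ?A = "partially_signed_sum X Y s K"
  let ?replace_row = "\<lambda>v. (\<chi> i. if i = k then v else ?A $ i)"
  have signed: "partially_signed_sum X Y (s(k := c)) K = ?replace_row (c *s X $ k + Y $ k)" for c
    using insert.hyps(2) by (auto simp: partially_signed_sum_def vec_eq_iff)
  have "det (?replace_row (c *s X $ k + Y $ k)) = 0" if "c = 1 \<or> c = -1" for c
    using insert.IH[of "s(k := c)"] insert.prems that unfolding signed by auto
  from this[of 1] this[of "-1"] have "det (?replace_row (X $ k + Y $ k)) = 0"
    and "det (?replace_row (- X $ k + Y $ k)) = 0"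
    by (simp_all only: vector_smult_lid vector_sneg_minus1 simp_thms)
  then have "2 * det (?replace_row (Y $ k)) = 0"
    using det_row_plus_minus[of k "X $ k" "Y $ k" ?A] by simp
  moreover have "partially_signed_sum X Y s (insert k K) = ?replace_row (Y $ k)"
    by (auto simp: partially_signed_sum_def vec_eq_iff)
  ultimately show ?case
    by simp
qed

lemma det_eq_0_if_det_signed_sums_eq_0:
  fixes X Y :: "'a::field_char_0 ^ 'n ^ 'n"
  assumes "\<And>s. (\<forall>i. s i = 1 \<or> s i = -1) \<Longrightarrow> det ((\<chi> i j. if i = j then s i else 0) ** X + Y) = 0"
  shows "det Y = 0"
proof -
  have "(\<chi> i j. if i = j then s i else 0) ** X + Y = partially_signed_sum X Y s {}" for s
    unfolding diagonal_matrix_mult_rows partially_signed_sum_def by (simp add: vec_eq_iff)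
  then have "det (partially_signed_sum X Y (\<lambda>_. 1) UNIV) = 0"
    using assms det_partially_signed_sum_eq_0[of UNIV X Y "\<lambda>_. 1"] by simp
  moreover have "partially_signed_sum X Y (\<lambda>_. 1) UNIV = Y"
    by (simp add: partially_signed_sum_def)
  ultimately show ?thesis
    by simp
qed

theorem lemma4p15:
  fixes X Y :: "complex ^ 'n ^ 'n"
  assumes "\<And>s :: 'n \<Rightarrow> complex. (\<forall>i. s i = 1 \<or> s i = -1) \<Longrightarrow>
             det ((\<chi> i j. if i = j then s i else 0) ** X + Y) = 0"
  shows "det Y = 0"
  using assms by (rule det_eq_0_if_det_signed_sums_eq_0)

end
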